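(* There exist an environment $E$ and a total preorder $\succeq$ on $\Pi^E$ such that $\succeq\in\mathrm{Ord}_{\mathrm{MR}}(E)\cap\mathrm{Ord}_{\mathrm{LTL}}(E)$ but $\succeq\notin\mathrm{Ord}_{\mathrm{LAR}}(E)$.
   Context: An environment is a tuple $E=(\mathcal S,\mathcal A,\mathcal T,\mathcal I)$ where $\mathcal S,\mathcal A$ are finite nonempty sets, $\mathcal T:\mathcal S\times\mathcal A\to\Delta(\mathcal S)$ and $\mathcal I\in\Delta(\mathcal S)$. A policy is a map $\pi:\mathcal S\to\Delta(\mathcal A)$ (stationary, possibly stochastic); $\Pi^E$ denotes the set of all policies. A trajectory $\xi=(s_0,a_0,s_1,a_1,\dots)\in\Xi:=\mathcal S\times(\mathcal A\times\mathcal S)^\omega$ is generated under $\pi$ by $s_0\sim\mathcal I$, $a_t\sim\pi(s_t)$, $s_{t+1}\sim\mathcal T(s_t,a_t)$; $\mathbb E^\pi_\xi$ denotes expectation under this distribution. An objective-specification formalism $X$ assigns to each environment $E$ a set of objective specifications, each inducing a total preorder $\succeq$ on $\Pi^E$; $\mathrm{Ord}_X(E)$ is the set of total preorders so induced. A specification defining a scalar $J:\Pi^E\to\mathbb R$ induces $\pi_1\succeq\pi_2\iff J(\pi_1)\ge J(\pi_2)$. MR: specification $(\mathcal R,\gamma)$, $\mathcal R:\mathcal S\times\mathcal A\times\mathcal S\to\mathbb R$, $\gamma\in[0,1)$, $J(\pi)=\mathbb E^\pi_\xi[\sum_{t=0}^\infty\gamma^t\mathcal R(s_t,a_t,s_{t+1})]$.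 LAR: specification $(\mathcal R)$, $\mathcal R:\mathcal S\times\mathcal A\times\mathcal S\to\mathbb R$, $J(\pi)=\lim_{N\to\infty}\frac1N\mathbb E^\pi_\xi[\sum_{t=0}^{N-1}\mathcal R(s_t,a_t,s_{t+1})]$. LTL: specification $(\varphi)$ with $\varphi$ a linear temporal logic formula whose atomic propositions are the transitions $(s,a,s')\in\mathcal S\times\mathcal A\times\mathcal S$, built with $\neg,\lor,\land,\to$ and the temporal operators $\bigcirc$ (next), $\square$ (always), $\lozenge$ (eventually), $\mathcal U$ (until). Semantics on a trajectory $\xi$ at time $t$: an atomic proposition $(s,a,s')$ holds iff $(s_t,a_t,s_{t+1})=(s,a,s')$; $\bigcirc\psi$ holds iff $\psi$ holds at $t+1$; $\square\psi$ iff $\psi$ holds at every $t'\ge t$; $\lozenge\psi$ iff $\psi$ holds at some $t'\ge t$; $\psi\,\mathcal U\,\chi$ iff there is $t'\ge t$ with $\chi$ holding at $t'$ and $\psi$ holding at every $t''$ with $t\le t''<t'$; Boolean connectives as usual. $\varphi(\xi)=1$ if $\varphi$ holds at time $0$ and $0$ otherwise; $J(\pi)=\mathbb E^\pi_\xi[\varphi(\xi)]$. *)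

theory Defs
  imports "HOL-Probability.Probability"
begin

text \<open>States and actions are encoded as natural numbers; an environment carries
  its finite nonempty state set S and action set A explicitly.  Distributions
  in Delta(X) are pmfs supported in X.\<close>

record env =
  St :: "nat set"
  Ac :: "nat set"
  Tr :: "nat \<Rightarrow> nat \<Rightarrow> nat pmf"
  Init :: "nat pmf"

definition wf_env :: "env \<Rightarrow> bool" where
  "wf_env E \<longleftrightarrow> finite (St E) \<and> St E \<noteq> {} \<and> finite (Ac E) \<and> Ac E \<noteq> {}
     \<and> set_pmf (Init E) \<subseteq> St E
     \<and> (\<forall>s\<in>St E. \<forall>a\<in>Ac E. set_pmf (Tr E s a) \<subseteq> St E)"

text \<open>Policies S -> Delta(A).  Values outside S are irrelevant and fixed to a
  dummy value so that policies correspond exactly to maps on S.\<close>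

definition policies :: "env \<Rightarrow> (nat \<Rightarrow> nat pmf) set" where
  "policies E = {\<pi>. (\<forall>s\<in>St E. set_pmf (\<pi> s) \<subseteq> Ac E) \<and> (\<forall>s. s \<notin> St E \<longrightarrow> \<pi> s = return_pmf 0)}"

text \<open>A trajectory s0,a0,s1,a1,... is represented as the stream of pairs (s_t,a_t).
  The probability that the trajectory starts with a given finite prefix:\<close>

fun pref_cont :: "env \<Rightarrow> (nat \<Rightarrow> nat pmf) \<Rightarrow> nat \<Rightarrow> nat \<Rightarrow> (nat \<times> nat) list \<Rightarrow> real" where
  "pref_cont E \<pi> s a [] = pmf (\<pi> s) a"
| "pref_cont E \<pi> s a ((s', a') # xs) = pmf (\<pi> s) a * pmf (Tr E s a) s' * pref_cont E \<pi> s' a' xs"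

fun pref_prob :: "env \<Rightarrow> (nat \<Rightarrow> nat pmf) \<Rightarrow> (nat \<times> nat) list \<Rightarrow> real" where
  "pref_prob E \<pi> [] = 1"
| "pref_prob E \<pi> ((s, a) # xs) = pmf (Init E) s * pref_cont E \<pi> s a xs"

definition traj :: "env \<Rightarrow> (nat \<Rightarrow> nat pmf) \<Rightarrow> (nat \<times> nat) stream measure" where
  "traj E \<pi> = (THE M. prob_space M \<and> sets M = sets (stream_space (count_space UNIV))
      \<and> (\<forall>xs. emeasure M {\<omega> \<in> space M. stake (length xs) \<omega> = xs} = ennreal (pref_prob E \<pi> xs)))"

definition trans_at :: "(nat \<times> nat) stream \<Rightarrow> nat \<Rightarrow> nat \<times> nat \<times> nat" where
  "trans_at \<omega> t = (fst (\<omega> !! t), snd (\<omega> !! t), fst (\<omega> !! Suc t))"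

definition J_MR :: "env \<Rightarrow> (nat \<Rightarrow> nat \<Rightarrow> nat \<Rightarrow> real) \<Rightarrow> real \<Rightarrow> (nat \<Rightarrow> nat pmf) \<Rightarrow> real" where
  "J_MR E R \<gamma> \<pi> = (\<integral>\<omega>. (\<Sum>t. \<gamma> ^ t * (case trans_at \<omega> t of (s, a, s') \<Rightarrow> R s a s')) \<partial>traj E \<pi>)"

definition J_LAR :: "env \<Rightarrow> (nat \<Rightarrow> nat \<Rightarrow> nat \<Rightarrow> real) \<Rightarrow> (nat \<Rightarrow> nat pmf) \<Rightarrow> real" where
  "J_LAR E R \<pi> = lim (\<lambda>N. (1 / real N) *
      (\<integral>\<omega>. (\<Sum>t<N. (case trans_at \<omega> t of (s, a, s') \<Rightarrow> R s a s')) \<partial>traj E \<pi>))"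

datatype ltl =
    Atom "nat \<times> nat \<times> nat"
  | LNot ltl
  | LOr ltl ltl
  | LAnd ltl ltl
  | LImp ltl ltl
  | LNext ltl
  | LAlways ltl
  | LEventually ltl
  | LUntil ltl ltl

fun ltl_atoms :: "ltl \<Rightarrow> (nat \<times> nat \<times> nat) set" where
  "ltl_atoms (Atom p) = {p}"
| "ltl_atoms (LNot f) = ltl_atoms f"
| "ltl_atoms (LOr f g) = ltl_atoms f \<union> ltl_atoms g"
| "ltl_atoms (LAnd f g) = ltl_atoms f \<union> ltl_atoms g"
| "ltl_atoms (LImp f g) = ltl_atoms f \<union> ltl_atoms g"
| "ltl_atoms (LNext f) = ltl_atoms f"
| "ltl_atoms (LAlways f) = ltl_atoms f"
| "ltl_atoms (LEventually f) = ltl_atoms f"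
| "ltl_atoms (LUntil f g) = ltl_atoms f \<union> ltl_atoms g"

fun ltl_holds :: "(nat \<times> nat) stream \<Rightarrow> nat \<Rightarrow> ltl \<Rightarrow> bool" where
  "ltl_holds \<omega> t (Atom p) \<longleftrightarrow> trans_at \<omega> t = p"
| "ltl_holds \<omega> t (LNot f) \<longleftrightarrow> \<not> ltl_holds \<omega> t f"
| "ltl_holds \<omega> t (LOr f g) \<longleftrightarrow> ltl_holds \<omega> t f \<or> ltl_holds \<omega> t g"
| "ltl_holds \<omega> t (LAnd f g) \<longleftrightarrow> ltl_holds \<omega> t f \<and> ltl_holds \<omega> t g"
| "ltl_holds \<omega> t (LImp f g) \<longleftrightarrow> (ltl_holds \<omega> t f \<longrightarrow> ltl_holds \<omega> t g)"
| "ltl_holds \<omega> t (LNext f) \<longleftrightarrow> ltl_holds \<omega> (Suc t) f"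
| "ltl_holds \<omega> t (LAlways f) \<longleftrightarrow> (\<forall>t'\<ge>t. ltl_holds \<omega> t' f)"
| "ltl_holds \<omega> t (LEventually f) \<longleftrightarrow> (\<exists>t'\<ge>t. ltl_holds \<omega> t' f)"
| "ltl_holds \<omega> t (LUntil f g) \<longleftrightarrow>
     (\<exists>t'\<ge>t. ltl_holds \<omega> t' g \<and> (\<forall>t''. t \<le> t'' \<and> t'' < t' \<longrightarrow> ltl_holds \<omega> t'' f))"

definition J_LTL :: "env \<Rightarrow> ltl \<Rightarrow> (nat \<Rightarrow> nat pmf) \<Rightarrow> real" where
  "J_LTL E \<phi> \<pi> = measure (traj E \<pi>) {\<omega> \<in> space (traj E \<pi>). ltl_holds \<omega> 0 \<phi>}"

definition ord_of :: "env \<Rightarrow> ((nat \<Rightarrow> nat pmf) \<Rightarrow> real) \<Rightarrow> (nat \<Rightarrow> nat pmf) rel" where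
  "ord_of E J = {(\<pi>1, \<pi>2). \<pi>1 \<in> policies E \<and> \<pi>2 \<in> policies E \<and> J \<pi>1 \<ge> J \<pi>2}"

definition Ord_MR :: "env \<Rightarrow> (nat \<Rightarrow> nat pmf) rel set" where
  "Ord_MR E = {ord_of E (J_MR E R \<gamma>) | R \<gamma>. 0 \<le> \<gamma> \<and> \<gamma> < 1}"

definition Ord_LAR :: "env \<Rightarrow> (nat \<Rightarrow> nat pmf) rel set" where
  "Ord_LAR E = {ord_of E (J_LAR E R) | R. True}"

definition Ord_LTL :: "env \<Rightarrow> (nat \<Rightarrow> nat pmf) rel set" where
  "Ord_LTL E = {ord_of E (J_LTL E \<phi>) | \<phi>. ltl_atoms \<phi> \<subseteq> St E \<times> Ac E \<times> St E}"

definition total_preorder_on :: "'a set \<Rightarrow> 'a rel \<Rightarrow> bool" where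
  "total_preorder_on X r \<longleftrightarrow> r \<subseteq> X \<times> X \<and> refl_on X r \<and> trans r \<and> total_on X r"

end

theory Submission
  imports Defs
begin

text \<open>Take two states 0 and 1 where every action leads to the absorbing state 1 and the run
  starts in 0.  The objective "the first transition is (0, 1, 1)" is an LTL atom and also the
  discounted return with discount 0 of the indicator reward of that transition.  A limit
  average, however, cannot see the single transient step out of state 0: two deterministic
  policies that differ only in state 0 have the same limit-average value for every reward
  function, while the objective strictly separates them.\<close>

abbreviation traj_space :: "(nat \<times> nat) stream measure" where
  "traj_space \<equiv> stream_space (count_space UNIV)"

lemma sstart_UNIV: "sstart UNIV xs = {\<omega>. stake (length xs) \<omega> = xs}"
proof (induction xs)
  case (Cons x xs)
  show ?case
  proof (rule set_eqI)
    fix \<omega>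
    show "\<omega> \<in> sstart UNIV (x # xs) \<longleftrightarrow> \<omega> \<in> {\<omega>. stake (length (x # xs)) \<omega> = x # xs}"
      using Cons by (cases \<omega>) auto
  qed
qed simp

lemma traj_eqI:
  assumes "prob_space M" and sets_M: "sets M = sets traj_space"
    and cyl: "\<And>xs. emeasure M {\<omega> \<in> space M. stake (length xs) \<omega> = xs} = pref_prob E \<pi> xs"
  shows "traj E \<pi> = M"
  unfolding traj_def
proof (rule the_equality)
  show "prob_space M \<and> sets M = sets traj_space \<and>
      (\<forall>xs. emeasure M {\<omega> \<in> space M. stake (length xs) \<omega> = xs} = pref_prob E \<pi> xs)"
    using assms by auto
next
  fix N
  assume N: "prob_space N \<and> sets N = sets traj_space \<and>
      (\<forall>xs. emeasure N {\<omega> \<in> space N. stake (length xs) \<omega> = xs} = pref_prob E \<pi> xs)"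
  have "space M = UNIV" "space N = UNIV"
    using sets_eq_imp_space_eq[OF sets_M] sets_eq_imp_space_eq[of N traj_space] N
    by (simp_all add: space_stream_space)
  then show "N = M"
    using assms N cyl
    by (intro stream_space_eq_sstart[of UNIV]) (auto simp: sstart_UNIV)
qed

lemma measurable_trans_at[measurable]:
  "(\<lambda>\<omega>. trans_at \<omega> t) \<in> traj_space \<rightarrow>\<^sub>M count_space UNIV"
  unfolding trans_at_def by measurable

lemma J_MR_indicator_discount_zero:
  "J_MR E (\<lambda>s a s'. indicator {p} (s, a, s')) 0 \<pi> = J_LTL E (Atom p) \<pi>"
proof -
  have "(\<Sum>t. 0 ^ t * (case trans_at \<omega> t of (s, a, s') \<Rightarrow> indicator {p} (s, a, s')))
      = (indicator {\<omega>. trans_at \<omega> 0 = p} \<omega> :: real)" for \<omega>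
    by (subst suminf_finite[of "{0}"]) (auto simp: indicator_def split: prod.split)
  then show ?thesis
    unfolding J_MR_def J_LTL_def by (simp add: Int_def conj_commute)
qed

lemma total_preorder_on_ord_of: "total_preorder_on (policies E) (ord_of E J)"
  unfolding total_preorder_on_def ord_of_def refl_on_def trans_def total_on_def by auto

lemma ord_of_LTL_Atom_in_Ord_MR: "ord_of E (J_LTL E (Atom p)) \<in> Ord_MR E"
  unfolding Ord_MR_def
  by (intro CollectI exI[of _ "\<lambda>s a s'. indicator {p} (s, a, s')"] exI[of _ 0])
    (simp add: J_MR_indicator_discount_zero[abs_def])

lemma ord_of_notin_Ord_LAR:
  assumes "\<pi>1 \<in> policies E" "\<pi>2 \<in> policies E" "J \<pi>1 < J \<pi>2"
    and "\<And>R. J_LAR E R \<pi>1 = J_LAR E R \<pi>2"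
  shows "ord_of E J \<notin> Ord_LAR E"
proof
  assume "ord_of E J \<in> Ord_LAR E"
  then obtain R where "ord_of E J = ord_of E (J_LAR E R)"
    unfolding Ord_LAR_def by auto
  moreover have "(\<pi>1, \<pi>2) \<in> ord_of E (J_LAR E R)" "(\<pi>1, \<pi>2) \<notin> ord_of E J"
    using assms by (auto simp: ord_of_def)
  ultimately show False by simp
qed

lemma LIMSEQ_average_eventually_const:
  fixes f :: "nat \<Rightarrow> real"
  assumes "\<And>t. t \<ge> 1 \<Longrightarrow> f t = c"
  shows "(\<lambda>N. 1 / real N * (\<Sum>t<N. f t)) \<longlonglongrightarrow> c"
proof (rule LIMSEQ_imp_Suc)
  have "(\<Sum>t<Suc n. f t) = f 0 + real n * c" for n
    using assms by (induction n) (auto simp: algebra_simps)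
  then have "1 / real (Suc n) * (\<Sum>t<Suc n. f t) = c + (f 0 - c) / real (Suc n)" for n
    by (simp add: field_simps)
  moreover have "(\<lambda>n. c + (f 0 - c) / real (Suc n)) \<longlonglongrightarrow> c"
    using tendsto_add[OF tendsto_const LIMSEQ_Suc[OF lim_const_over_n[of "f 0 - c"]]] by simp
  ultimately show "(\<lambda>n. 1 / real (Suc n) * (\<Sum>t<Suc n. f t)) \<longlonglongrightarrow> c"
    by simp
qed

definition transient_env :: env where
  "transient_env = \<lparr>St = {0, 1}, Ac = {0, 1}, Tr = (\<lambda>s a. return_pmf 1), Init = return_pmf 0\<rparr>"

lemma transient_env_simps[simp]:
  "St transient_env = {0, 1}" "Ac transient_env = {0, 1}"
  "Tr transient_env s a = return_pmf 1" "Init transient_env = return_pmf 0"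
  by (simp_all add: transient_env_def)

lemma wf_transient_env: "wf_env transient_env"
  by (simp add: wf_env_def)

definition det_policy :: "(nat \<Rightarrow> nat) \<Rightarrow> nat \<Rightarrow> nat pmf" where
  "det_policy d s = return_pmf (d s)"

definition det_run :: "(nat \<Rightarrow> nat) \<Rightarrow> (nat \<times> nat) stream" where
  "det_run d = (0, d 0) ## sconst (1, d 1)"

lemma trans_at_det_run:
  "trans_at (det_run d) t = (if t = 0 then (0, d 0, 1) else (1, d 1, 1))"
  by (cases t) (simp_all add: trans_at_def det_run_def)

lemma pref_cont_det_policy:
  "pref_cont transient_env (det_policy d) s a xs =
     (if a = d s \<and> xs = replicate (length xs) (1, d 1) then 1 else 0)"
proof (induction xs arbitrary: s a)
  case (Cons y xs)
  then show ?case
    by (cases y) (auto simp: det_policy_def pmf_return indicator_def)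
qed (simp add: det_policy_def pmf_return indicator_def)

lemma pref_prob_det_policy:
  "pref_prob transient_env (det_policy d) xs = (if stake (length xs) (det_run d) = xs then 1 else 0)"
proof (cases xs)
  case (Cons y ys)
  obtain s a where "y = (s, a)" by fastforce
  with Cons show ?thesis
    by (cases "s = 0") (auto simp: det_run_def map_replicate_const pref_cont_det_policy
        pmf_return indicator_def)
qed simp

lemma traj_det_policy: "traj transient_env (det_policy d) = return traj_space (det_run d)"
proof (rule traj_eqI)
  show "prob_space (return traj_space (det_run d))"
    by (rule prob_space_return) (simp add: space_stream_space)
  fix xs :: "(nat \<times> nat) list"
  have "{\<omega>. stake (length xs) \<omega> = xs} \<in> sets traj_space"
    using sstart_sets[of UNIV xs] by (simp add: sstart_UNIV)
  then show "emeasure (return traj_space (det_run d))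
      {\<omega> \<in> space (return traj_space (det_run d)). stake (length xs) \<omega> = xs}
      = pref_prob transient_env (det_policy d) xs"
    by (simp add: space_stream_space pref_prob_det_policy)
qed simp

lemma J_LTL_det_policy:
  "J_LTL transient_env (Atom (0, 1, 1)) (det_policy d) = (if d 0 = 1 then 1 else 0)"
proof -
  have "{\<omega> \<in> space traj_space. trans_at \<omega> 0 = (0, 1, 1)} \<in> sets traj_space"
    by measurable
  then show ?thesis
    by (simp add: J_LTL_def traj_det_policy measure_return trans_at_det_run space_stream_space)
qed

lemma J_LAR_det_policy: "J_LAR transient_env R (det_policy d) = R 1 (d 1) 1"
proof -
  have "(\<integral>\<omega>. (\<Sum>t<N. case trans_at \<omega> t of (s, a, s') \<Rightarrow> R s a s') \<partial>return traj_space (det_run d))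
      = (\<Sum>t<N. case trans_at (det_run d) t of (s, a, s') \<Rightarrow> R s a s')" for N
    by (rule integral_return) (simp_all add: space_stream_space)
  moreover have "(\<lambda>N. 1 / real N * (\<Sum>t<N. case trans_at (det_run d) t of (s, a, s') \<Rightarrow> R s a s'))
      \<longlonglongrightarrow> R 1 (d 1) 1"
    by (rule LIMSEQ_average_eventually_const) (simp add: trans_at_det_run)
  ultimately show ?thesis
    unfolding J_LAR_def traj_det_policy by (simp add: limI)
qed

theorem mainTheorem9:
  shows "\<exists>E ord. wf_env E \<and> total_preorder_on (policies E) ord
           \<and> ord \<in> Ord_MR E \<and> ord \<in> Ord_LTL E \<and> ord \<notin> Ord_LAR E"
proof (intro exI conjI)
  let ?J = "J_LTL transient_env (Atom (0, 1, 1))"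
  show "wf_env transient_env" by (rule wf_transient_env)
  show "total_preorder_on (policies transient_env) (ord_of transient_env ?J)"
    by (rule total_preorder_on_ord_of)
  show "ord_of transient_env ?J \<in> Ord_MR transient_env"
    by (rule ord_of_LTL_Atom_in_Ord_MR)
  show "ord_of transient_env ?J \<in> Ord_LTL transient_env"
    unfolding Ord_LTL_def by auto
  let ?stay = "det_policy (\<lambda>s. 0)" and ?go = "det_policy (\<lambda>s. if s = 0 then 1 else 0)"
  show "ord_of transient_env ?J \<notin> Ord_LAR transient_env"
  proof (rule ord_of_notin_Ord_LAR)
    show "?stay \<in> policies transient_env" "?go \<in> policies transient_env"
      by (auto simp: policies_def det_policy_def)
    show "?J ?stay < ?J ?go" unfolding J_LTL_det_policy by simp
    show "J_LAR transient_env R ?stay = J_LAR transient_env R ?go" for R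
      by (simp add: J_LAR_det_policy)
  qed
qed

end
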